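(* Let $G=(V(G),E(G),\ell)$ be an $n$-order node-labeled graph, $k\ge 2$, and let $\mathbf{F}\in\mathbb{R}^{n\times d}$ be a node feature matrix consistent with $\ell$. Then for all $t\ge 1$ there exist functions $g^{(0)},\dots,g^{(t)}\colon V(G)^k\to\mathbb{R}$, with $g^{(0)}$ consistent with the initial colors, scalars $\alpha_1,\dots,\alpha_k,\beta_1,\dots,\beta_k$ and feed-forward networks $\mathsf{FFN}$ with $$g^{(s)}(\mathbf{u})=\mathsf{FFN}\Big(g^{(s-1)}(\mathbf{u})+\sum_{j\in[k]}\Big(\alpha_j\sum_{w\in\Delta_j(\mathbf{u})}g^{(s-1)}(\phi_j(\mathbf{u},w))+\beta_j\sum_{w\in V(G)\setminus\Delta_j(\mathbf{u})}g^{(s-1)}(\phi_j(\mathbf{u},w))\Big)\Big)$$ for $1\le s\le t$, such that for all $\mathbf{u},\mathbf{v}\in V(G)^k$, $$C^{k,\mathrm{M}}_t(\mathbf{u})=C^{k,\mathrm{M}}_t(\mathbf{v})\iff g^{(t)}(\mathbf{u})=g^{(t)}(\mathbf{v}).$$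
   Context: $\phi_j(\mathbf{u},w)$ replaces the $j$-th entry of $\mathbf{u}=(u_1,\dots,u_k)$ by $w$; $\Delta_j(\mathbf{u})=N(u_j)$ is the set of nodes adjacent to $u_j$. $C^{k,\mathrm{M}}_t$ is the coloring of the $\delta$-$k$-WL: initial colors are determined by the atomic type of the tuple and the node labels, and $C^{k,\mathrm{M}}_t(\mathbf{v})=\mathsf{RELABEL}\big(C^{k,\mathrm{M}}_{t-1}(\mathbf{v}),(\{\!\{(C^{k,\mathrm{M}}_{t-1}(\phi_j(\mathbf{v},w)),\mathrm{adj}(v_j,w))\mid w\in V(G)\}\!\})_{j=1}^k\big)$, with $\mathrm{adj}(v,w)=1$ if $(v,w)\in E(G)$ and $0$ otherwise, and $\mathsf{RELABEL}$ injective into fresh natural numbers. "$g^{(0)}$ consistent with the initial colors" means $g^{(0)}(\mathbf{u})=g^{(0)}(\mathbf{v})$ iff $\mathbf{u},\mathbf{v}$ have the same initial color. *)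

theory Defs
  imports Complex_Main "HOL-Library.Multiset"
begin

(* k-tuples over V, represented as lists of length k (index j ranges over 0..<k) *)
definition tuples :: "'a set \<Rightarrow> nat \<Rightarrow> 'a list set" where
  "tuples V k = {u. length u = k \<and> set u \<subseteq> V}"

definition atp :: "('a \<times> 'a) set \<Rightarrow> 'a list \<Rightarrow> (bool \<times> bool) list" where
  "atp E u = [(u ! i = u ! j, (u ! i, u ! j) \<in> E). i \<leftarrow> [0..<length u], j \<leftarrow> [0..<length u]]"

definition adj :: "('a \<times> 'a) set \<Rightarrow> 'a \<Rightarrow> 'a \<Rightarrow> nat" where
  "adj E v w = (if (v, w) \<in> E then 1 else 0)"

(* delta-k-WL coloring; c0 = initial coloring, R = RELABEL *)
fun dkwl :: "'a set \<Rightarrow> ('a \<times> 'a) set \<Rightarrow> ('a list \<Rightarrow> nat)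
     \<Rightarrow> (nat \<Rightarrow> (nat \<times> nat) multiset list \<Rightarrow> nat) \<Rightarrow> nat \<Rightarrow> 'a list \<Rightarrow> nat" where
  "dkwl V E c0 R 0 u = c0 u"
| "dkwl V E c0 R (Suc t) u =
     R (dkwl V E c0 R t u)
       (map (\<lambda>j. image_mset (\<lambda>w. (dkwl V E c0 R t (u[j := w]), adj E (u ! j) w)) (mset_set V))
            [0..<length u])"

(* Feed-forward network R -> R: layers (W, b) with W a list of rows;
   ReLU after every layer except the last one. *)
definition relu :: "real \<Rightarrow> real" where
  "relu x = max 0 x"

definition affine :: "real list list \<Rightarrow> real list \<Rightarrow> real list \<Rightarrow> real list" where
  "affine W b x = map2 (\<lambda>row c. (\<Sum>i<length x. row ! i * x ! i) + c) W b"

fun ffn_eval :: "(real list list \<times> real list) list \<Rightarrow> real list \<Rightarrow> real list" where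
  "ffn_eval [] x = x"
| "ffn_eval [(W, b)] x = affine W b x"
| "ffn_eval ((W, b) # L) x = ffn_eval L (map relu (affine W b x))"

fun ffn_wf :: "nat \<Rightarrow> (real list list \<times> real list) list \<Rightarrow> bool" where
  "ffn_wf din [] = (din = 1)"
| "ffn_wf din ((W, b) # L) =
     ((\<forall>row \<in> set W. length row = din) \<and> length b = length W \<and> ffn_wf (length W) L)"

definition is_ffn :: "(real \<Rightarrow> real) \<Rightarrow> bool" where
  "is_ffn f \<longleftrightarrow> (\<exists>L. L \<noteq> [] \<and> ffn_wf 1 L \<and> (\<forall>x. f x = hd (ffn_eval L [x])))"

end

theory Submission imports Defs begin

(* Encode a colour c by N ^ c with N > |V|. A sum of such powers over at most |V| vertices is a
   base-N numeral whose digits count colours, so it determines the colour multiset. With Q = N ^ K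
   above every such numeral, alpha_j = Q ^ (2j+1) and beta_j = Q ^ (2j+2), the aggregated value is a
   base-Q numeral whose digits are the old colour and, for each j, the colour multisets of the
   adjacent and of the non-adjacent j-neighbours; these determine the new colour. On the finitely
   many values that occur, the map from the aggregated value to N ^ (new colour) is interpolated by
   a ReLU network with one hidden layer. *)

definition relu_sum :: "real \<Rightarrow> (real \<times> real) list \<Rightarrow> real \<Rightarrow> real" where
  "relu_sum c ps x = c + (\<Sum>(a, b)\<leftarrow>ps. a * relu (x - b))"

lemma is_ffn_relu_sum: "is_ffn (relu_sum c ps)"
proof -
  let ?L = "[(map (\<lambda>_. [1]) ps, map (\<lambda>p. - snd p) ps), ([map fst ps], [c])]"
  have hidden: "map relu (affine (map (\<lambda>_. [1]) ps) (map (\<lambda>p. - snd p) ps) [x])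
      = map (\<lambda>p. relu (x - snd p)) ps" for x
    by (induction ps) (auto simp: affine_def)
  have "hd (ffn_eval ?L [x]) = relu_sum c ps x" for x
  proof -
    have "hd (ffn_eval ?L [x])
        = (\<Sum>i<length ps. map fst ps ! i * map (\<lambda>p. relu (x - snd p)) ps ! i) + c"
      by (simp add: hidden affine_def)
    also have "(\<Sum>i<length ps. map fst ps ! i * map (\<lambda>p. relu (x - snd p)) ps ! i)
        = (\<Sum>(a, b)\<leftarrow>ps. a * relu (x - b))"
      by (simp add: sum_list_sum_nth atLeast0LessThan case_prod_beta)
    finally show ?thesis by (simp add: relu_sum_def)
  qed
  moreover have "ffn_wf 1 ?L" by simp
  ultimately show ?thesis unfolding is_ffn_def by (intro exI[of _ ?L]) auto
qed

(* Points are added in increasing order; a kink at the previous maximum M leaves all earlier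
   values unchanged and has the right slope to hit the new one. *)
lemma relu_sum_interpolates: "finite S \<Longrightarrow> \<exists>c ps. \<forall>x\<in>S. relu_sum c ps x = y x"
proof (induction S rule: finite_linorder_max_induct)
  case empty
  then show ?case by auto
next
  case (insert b A)
  show ?case
  proof (cases "A = {}")
    case True
    then show ?thesis by (auto simp: relu_sum_def intro!: exI[of _ "y b"] exI[of _ "[]"])
  next
    case False
    from insert obtain c ps where cps: "\<forall>x\<in>A. relu_sum c ps x = y x" by auto
    define M where "M = Max A"
    have "M \<in> A" using False insert by (simp add: M_def)
    then have "M < b" using insert by auto
    have le_M: "x \<le> M" if "x \<in> A" for x using that insert by (simp add: M_def)
    define a where "a = (y b - relu_sum c ps b) / (b - M)"
    have snoc: "relu_sum c (ps @ [(a, M)]) x = relu_sum c ps x + a * relu (x - M)" for x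
      by (simp add: relu_sum_def)
    have "relu_sum c (ps @ [(a, M)]) x = y x" if "x \<in> insert b A" for x
      using that
    proof
      assume "x = b"
      have "a * relu (b - M) = y b - relu_sum c ps b"
        using \<open>M < b\<close> by (simp add: a_def relu_def)
      with \<open>x = b\<close> show ?thesis by (simp add: snoc)
    next
      assume "x \<in> A"
      with le_M[of x] cps show ?thesis by (simp add: snoc relu_def)
    qed
    then show ?thesis by blast
  qed
qed

lemma exists_ffn_factoring:
  assumes "finite T" and "\<forall>u\<in>T. \<forall>v\<in>T. a u = a v \<longrightarrow> b u = b v"
  shows "\<exists>f. is_ffn f \<and> (\<forall>u\<in>T. f (a u) = (b u :: real))"
proof -
  obtain c ps where cps: "\<forall>x\<in>a ` T. relu_sum c ps x = b (inv_into T a x)"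
    using relu_sum_interpolates[of "a ` T" "\<lambda>x. b (inv_into T a x)"] assms(1) by blast
  have "relu_sum c ps (a u) = b u" if "u \<in> T" for u
  proof -
    have "inv_into T a (a u) \<in> T" "a (inv_into T a (a u)) = a u"
      using that by (simp_all add: inv_into_into f_inv_into_f)
    then have "b (inv_into T a (a u)) = b u" using assms(2) that by blast
    then show ?thesis using cps that by simp
  qed
  then show ?thesis using is_ffn_relu_sum[of c ps] by blast
qed

lemma digit_sum_less: "\<forall>i<m. d i < Q \<Longrightarrow> (\<Sum>i<m. d i * Q ^ i) < (Q :: nat) ^ m"
proof (induction m)
  case 0
  then show ?case by simp
next
  case (Suc m)
  then have "(\<Sum>i<m. d i * Q ^ i) < Q ^ m" "d m \<le> Q - 1" by auto
  then have "(\<Sum>i<Suc m. d i * Q ^ i) < Q ^ m + (Q - 1) * Q ^ m"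
    by (simp add: add_less_le_mono mult_right_mono)
  also have "\<dots> = Q ^ Suc m" using Suc.prems by (cases Q) auto
  finally show ?case .
qed

lemma digit_sum_inj:
  assumes "\<forall>i<m. d i < Q" and "\<forall>i<m. e i < (Q :: nat)"
    and "(\<Sum>i<m. d i * Q ^ i) = (\<Sum>i<m. e i * Q ^ i)"
  shows "\<forall>i<m. d i = e i"
  using assms
proof (induction m)
  case 0
  then show ?case by simp
next
  case (Suc m)
  have low_d: "(\<Sum>i<m. d i * Q ^ i) < Q ^ m" and low_e: "(\<Sum>i<m. e i * Q ^ i) < Q ^ m"
    using Suc.prems by (auto intro!: digit_sum_less)
  have eq: "(\<Sum>i<m. d i * Q ^ i) + d m * Q ^ m = (\<Sum>i<m. e i * Q ^ i) + e m * Q ^ m"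
    using Suc.prems(3) by simp
  have "0 < Q ^ m" using Suc.prems by auto
  then have top: "d m = e m"
    using arg_cong[OF eq, of "\<lambda>x. x div Q ^ m"] low_d low_e by simp
  with eq have "(\<Sum>i<m. d i * Q ^ i) = (\<Sum>i<m. e i * Q ^ i)" by simp
  then have "\<forall>i<m. d i = e i" using Suc.prems(1,2) by (intro Suc.IH) auto
  with top show ?case using less_Suc_eq by auto
qed

lemma sum_mset_power_eq_digit_sum:
  "set_mset M \<subseteq> {..<K} \<Longrightarrow> (\<Sum>x\<in>#M. (N :: nat) ^ x) = (\<Sum>c<K. count M c * N ^ c)"
proof (induction M)
  case empty
  then show ?case by simp
next
  case (add x M)
  then have "x < K" by auto
  have "(\<Sum>c<K. count (add_mset x M) c * N ^ c)
      = (\<Sum>c<K. count M c * N ^ c + (if c = x then N ^ c else 0))"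
    by (intro sum.cong) auto
  also have "\<dots> = (\<Sum>c<K. count M c * N ^ c) + N ^ x"
    using \<open>x < K\<close> by (simp add: sum.distrib)
  finally show ?case using add by simp
qed

lemma sum_mset_power_less:
  assumes "set_mset M \<subseteq> {..<K}" and "size M < N"
  shows "(\<Sum>x\<in>#M. N ^ x) < (N :: nat) ^ K"
proof -
  have "\<forall>c<K. count M c < N" using assms(2) count_le_size[of M] le_less_trans by blast
  then show ?thesis using assms(1) by (simp add: sum_mset_power_eq_digit_sum digit_sum_less)
qed

lemma sum_mset_power_inj:
  assumes "set_mset M \<subseteq> {..<K}" and "set_mset M' \<subseteq> {..<K}"
    and "size M < N" and "size M' < N"
    and "(\<Sum>x\<in>#M. N ^ x) = (\<Sum>x\<in>#M'. (N :: nat) ^ x)"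
  shows "M = M'"
proof (rule multiset_eqI)
  fix c
  have "\<forall>c<K. count M c < N" "\<forall>c<K. count M' c < N"
    using assms(3,4) count_le_size[of M] count_le_size[of M'] le_less_trans by blast+
  then have "\<forall>c<K. count M c = count M' c"
    using assms(1,2,5) by (intro digit_sum_inj[of K _ N]) (simp_all add: sum_mset_power_eq_digit_sum)
  moreover have "count M c = 0 \<and> count M' c = 0" if "\<not> c < K"
    using that assms(1,2) by (auto simp: count_eq_zero_iff)
  ultimately show "count M c = count M' c" by (cases "c < K") auto
qed

lemma sum_power_less:
  assumes "finite S" and "\<forall>w\<in>S. f w < K" and "card S < N"
  shows "(\<Sum>w\<in>S. N ^ f w) < (N :: nat) ^ K"
proof -
  have "set_mset (image_mset f (mset_set S)) \<subseteq> {..<K}" "size (image_mset f (mset_set S)) < N"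
    using assms by auto
  then have "(\<Sum>x\<in>#image_mset f (mset_set S). N ^ x) < N ^ K" by (rule sum_mset_power_less)
  then show ?thesis by (simp add: sum_unfold_sum_mset multiset.map_comp o_def)
qed

lemma sum_power_inj:
  assumes "finite S" and "\<forall>w\<in>S. f w < K" and "card S < N"
    and "finite S'" and "\<forall>w\<in>S'. f' w < K" and "card S' < N"
    and "(\<Sum>w\<in>S. N ^ f w) = (\<Sum>w\<in>S'. (N :: nat) ^ f' w)"
  shows "image_mset f (mset_set S) = image_mset f' (mset_set S')"
proof (rule sum_mset_power_inj[of _ K _ N])
  show "(\<Sum>x\<in>#image_mset f (mset_set S). N ^ x) = (\<Sum>x\<in>#image_mset f' (mset_set S'). N ^ x)"
    using assms(7) by (simp add: sum_unfold_sum_mset multiset.map_comp o_def)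
qed (use assms in auto)

definition interleave :: "nat \<Rightarrow> (nat \<Rightarrow> nat) \<Rightarrow> (nat \<Rightarrow> nat) \<Rightarrow> nat \<Rightarrow> nat" where
  "interleave x a b i = (if i = 0 then x else if odd i then a (i div 2) else b (i div 2 - 1))"

lemma interleave_digit_sum:
  "x + (\<Sum>j<k. Q ^ (2*j+1) * a j + Q ^ (2*j+2) * b j)
     = (\<Sum>i<2*k+1. interleave x a b i * (Q :: nat) ^ i)"
proof (induction k)
  case 0
  then show ?case by (simp add: interleave_def)
next
  case (Suc k)
  have "2 * Suc k + 1 = Suc (Suc (2*k+1))" by simp
  moreover have "interleave x a b (2*k+1) = a k" "interleave x a b (Suc (2*k+1)) = b k"
    by (auto simp: interleave_def)
  ultimately show ?case using Suc by (simp only: sum.lessThan_Suc) (simp add: algebra_simps)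
qed

lemma interleaved_sum_inj:
  assumes "x < Q" and "x' < Q" and "\<forall>j<k. a j < Q \<and> b j < Q \<and> a' j < Q \<and> b' j < (Q :: nat)"
    and "x + (\<Sum>j<k. Q ^ (2*j+1) * a j + Q ^ (2*j+2) * b j)
       = x' + (\<Sum>j<k. Q ^ (2*j+1) * a' j + Q ^ (2*j+2) * b' j)"
  shows "x = x' \<and> (\<forall>j<k. a j = a' j \<and> b j = b' j)"
proof -
  have "i div 2 - 1 < k" "odd i \<Longrightarrow> i div 2 < k" if "i < 2*k+1" "i \<noteq> 0" for i
    using that by presburger+
  then have "\<forall>i<2*k+1. interleave x a b i < Q" "\<forall>i<2*k+1. interleave x' a' b' i < Q"
    using assms(1-3) by (auto simp: interleave_def)
  then have digits: "\<forall>i<2*k+1. interleave x a b i = interleave x' a' b' i"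
    by (rule digit_sum_inj) (use assms(4) in \<open>simp only: interleave_digit_sum\<close>)
  have "x = x'" using digits[rule_format, of 0] by (simp add: interleave_def)
  moreover have "a j = a' j \<and> b j = b' j" if "j < k" for j
    using digits[rule_format, of "2*j+1"] digits[rule_format, of "2*j+2"] that
    by (simp_all add: interleave_def)
  ultimately show ?thesis by blast
qed

lemma finite_tuples: "finite V \<Longrightarrow> finite (tuples V k)"
  using finite_lists_length_eq[of V k] by (simp add: tuples_def conj_commute)

lemma tuples_update: "u \<in> tuples V k \<Longrightarrow> w \<in> V \<Longrightarrow> u[j := w] \<in> tuples V k"
  using set_update_subsetI[of u V w j] by (auto simp: tuples_def)

definition neighbour_colours ::
    "'a set \<Rightarrow> ('a \<times> 'a) set \<Rightarrow> ('a list \<Rightarrow> nat) \<Rightarrow> 'a list \<Rightarrow> (nat \<times> nat) multiset list" where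
  "neighbour_colours V E c u =
     map (\<lambda>j. image_mset (\<lambda>w. (c (u[j := w]), adj E (u ! j) w)) (mset_set V)) [0..<length u]"

lemma dkwl_Suc:
  "dkwl V E c0 R (Suc t) u = R (dkwl V E c0 R t u) (neighbour_colours V E (dkwl V E c0 R t) u)"
  by (simp add: neighbour_colours_def)

lemma image_mset_adj_split:
  assumes "finite V"
  shows "image_mset (\<lambda>w. (f w, adj E x w)) (mset_set V)
    = image_mset (\<lambda>c. (c, 1)) (image_mset f (mset_set {w\<in>V. (x, w) \<in> E}))
    + image_mset (\<lambda>c. (c, 0)) (image_mset f (mset_set (V - {w\<in>V. (x, w) \<in> E})))"
proof -
  let ?S = "{w\<in>V. (x, w) \<in> E}"
  have "mset_set V = mset_set ?S + mset_set (V - ?S)"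
    using assms mset_set_Union[of ?S "V - ?S"] by (simp add: Un_absorb1)
  moreover have "image_mset (\<lambda>w. (f w, adj E x w)) (mset_set ?S)
      = image_mset (\<lambda>w. (f w, 1)) (mset_set ?S)"
    using assms by (intro image_mset_cong) (auto simp: adj_def)
  moreover have "image_mset (\<lambda>w. (f w, adj E x w)) (mset_set (V - ?S))
      = image_mset (\<lambda>w. (f w, 0)) (mset_set (V - ?S))"
    using assms by (intro image_mset_cong) (auto simp: adj_def)
  ultimately show ?thesis by (simp add: multiset.map_comp o_def)
qed

(* The aggregation of the theorem for g = N ^ c, alpha_j = Q ^ (2j+1) and beta_j = Q ^ (2j+2). *)
definition wl_message ::
    "'a set \<Rightarrow> ('a \<times> 'a) set \<Rightarrow> nat \<Rightarrow> nat \<Rightarrow> ('a list \<Rightarrow> nat) \<Rightarrow> 'a list \<Rightarrow> nat" where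
  "wl_message V E N Q c u = N ^ c u
     + (\<Sum>j<length u. Q ^ (2*j+1) * (\<Sum>w\<in>{w\<in>V. (u ! j, w) \<in> E}. N ^ c (u[j := w]))
                    + Q ^ (2*j+2) * (\<Sum>w\<in>V - {w\<in>V. (u ! j, w) \<in> E}. N ^ c (u[j := w])))"

lemma wl_message_inj:
  assumes "finite V" and "card V < N" and "1 < N"
    and "u \<in> tuples V k" and "v \<in> tuples V k" and bound: "\<forall>w\<in>tuples V k. c w < K"
    and "wl_message V E N (N ^ K) c u = wl_message V E N (N ^ K) c v"
  shows "c u = c v \<and> neighbour_colours V E c u = neighbour_colours V E c v"
proof -
  define Nb where "Nb x j = {w\<in>V. (x ! j, w) \<in> E}" for x :: "'a list" and j
  define A where "A x j = (\<Sum>w\<in>Nb x j. N ^ c (x[j := w]))" for x j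
  define B where "B x j = (\<Sum>w\<in>V - Nb x j. N ^ c (x[j := w]))" for x j
  have parts: "finite S" "\<forall>w\<in>S. c (x[j := w]) < K" "card S < N"
    if "S \<subseteq> V" and "x \<in> tuples V k" for S x j
  proof -
    show "finite S" using that(1) assms(1) by (rule finite_subset)
    show "\<forall>w\<in>S. c (x[j := w]) < K" using bound tuples_update[OF that(2)] that(1) by blast
    show "card S < N" using card_mono[OF assms(1) that(1)] assms(2) by simp
  qed
  have Nb_sub: "Nb x j \<subseteq> V" "V - Nb x j \<subseteq> V" for x j by (auto simp: Nb_def)
  have digits_less: "N ^ c x < N ^ K \<and> (\<forall>j<k. A x j < N ^ K \<and> B x j < N ^ K)"
    if "x \<in> tuples V k" for x
    using that bound assms(3) sum_power_less[OF parts[OF Nb_sub(1)]] sum_power_less[OF parts[OF Nb_sub(2)]]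
    by (simp add: A_def B_def power_strict_increasing)
  have lengths: "length u = k" "length v = k" using assms(4,5) by (auto simp: tuples_def)
  then have "N ^ c u + (\<Sum>j<k. (N ^ K) ^ (2*j+1) * A u j + (N ^ K) ^ (2*j+2) * B u j)
      = N ^ c v + (\<Sum>j<k. (N ^ K) ^ (2*j+1) * A v j + (N ^ K) ^ (2*j+2) * B v j)"
    using assms(7) by (simp add: wl_message_def A_def B_def Nb_def)
  then have digits_eq: "N ^ c u = N ^ c v \<and> (\<forall>j<k. A u j = A v j \<and> B u j = B v j)"
    using digits_less[OF assms(4)] digits_less[OF assms(5)]
    by (intro interleaved_sum_inj[where Q = "N ^ K"]) auto
  then have "c u = c v" using assms(3) by simp
  moreover have "image_mset (\<lambda>w. (c (u[j := w]), adj E (u ! j) w)) (mset_set V)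
      = image_mset (\<lambda>w. (c (v[j := w]), adj E (v ! j) w)) (mset_set V)" if "j < k" for j
  proof -
    have "A u j = A v j" "B u j = B v j" using digits_eq that by auto
    then have "image_mset (\<lambda>w. c (u[j := w])) (mset_set (Nb u j))
        = image_mset (\<lambda>w. c (v[j := w])) (mset_set (Nb v j))"
      "image_mset (\<lambda>w. c (u[j := w])) (mset_set (V - Nb u j))
        = image_mset (\<lambda>w. c (v[j := w])) (mset_set (V - Nb v j))"
      unfolding A_def B_def
      by (simp_all only: sum_power_inj[OF parts[OF Nb_sub(1) assms(4)] parts[OF Nb_sub(1) assms(5)]]
          sum_power_inj[OF parts[OF Nb_sub(2) assms(4)] parts[OF Nb_sub(2) assms(5)]])
    then show ?thesis by (simp only: image_mset_adj_split[OF assms(1)] Nb_def)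
  qed
  then have "neighbour_colours V E c u = neighbour_colours V E c v"
    unfolding neighbour_colours_def lengths by (intro map_cong) auto
  ultimately show ?thesis ..
qed

lemma dkwl_step_ffn:
  assumes "finite V" and "card V < N" and "1 < N"
    and "\<forall>u\<in>tuples V k. dkwl V E c0 R p u < K"
  shows "\<exists>f. is_ffn f \<and> (\<forall>u\<in>tuples V k.
           f (wl_message V E N (N ^ K) (dkwl V E c0 R p) u) = N ^ dkwl V E c0 R (Suc p) u)"
proof (rule exists_ffn_factoring[OF finite_tuples[OF assms(1)]], intro ballI impI)
  fix u v assume "u \<in> tuples V k" "v \<in> tuples V k"
    and "real (wl_message V E N (N ^ K) (dkwl V E c0 R p) u)
       = real (wl_message V E N (N ^ K) (dkwl V E c0 R p) v)"
  then have "dkwl V E c0 R p u = dkwl V E c0 R p v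
      \<and> neighbour_colours V E (dkwl V E c0 R p) u = neighbour_colours V E (dkwl V E c0 R p) v"
    using assms by (intro wl_message_inj) auto
  then show "real (N ^ dkwl V E c0 R (Suc p) u) = real (N ^ dkwl V E c0 R (Suc p) v)"
    by (simp only: dkwl_Suc)
qed

theorem corollaryI4:
  fixes V :: "'a set" and E :: "('a \<times> 'a) set" and lab :: "'a \<Rightarrow> 'l"
    and F :: "'a \<Rightarrow> real list" and n d k t :: nat
    and c0 :: "'a list \<Rightarrow> nat" and R :: "nat \<Rightarrow> (nat \<times> nat) multiset list \<Rightarrow> nat"
  assumes "finite V" and "card V = n"
    and "E \<subseteq> V \<times> V" and "sym E" and "\<forall>v. (v, v) \<notin> E"
    and "\<forall>v\<in>V. length (F v) = d"
    and "\<forall>v\<in>V. \<forall>w\<in>V. F v = F w \<longleftrightarrow> lab v = lab w"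
    and "k \<ge> 2"
    and "\<forall>u\<in>tuples V k. \<forall>v\<in>tuples V k.
           c0 u = c0 v \<longleftrightarrow> (atp E u = atp E v \<and> map lab u = map lab v)"
    and "\<forall>a b a' b'. R a b = R a' b' \<longrightarrow> a = a' \<and> b = b'"
    and "t \<ge> 1"
  shows "\<exists>(g :: nat \<Rightarrow> 'a list \<Rightarrow> real) (\<alpha> :: nat \<Rightarrow> real) (\<beta> :: nat \<Rightarrow> real)
            (ffn :: nat \<Rightarrow> real \<Rightarrow> real).
     (\<forall>u\<in>tuples V k. \<forall>v\<in>tuples V k. g 0 u = g 0 v \<longleftrightarrow> c0 u = c0 v)
   \<and> (\<forall>s\<in>{1..t}. is_ffn (ffn s))
   \<and> (\<forall>s\<in>{1..t}. \<forall>u\<in>tuples V k.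
        g s u = ffn s (g (s - 1) u
          + (\<Sum>j<k. \<alpha> j * (\<Sum>w\<in>{w\<in>V. (u ! j, w) \<in> E}. g (s - 1) (u[j := w]))
                   + \<beta> j * (\<Sum>w\<in>V - {w\<in>V. (u ! j, w) \<in> E}. g (s - 1) (u[j := w])))))
   \<and> (\<forall>u\<in>tuples V k. \<forall>v\<in>tuples V k.
        dkwl V E c0 R t u = dkwl V E c0 R t v \<longleftrightarrow> g t u = g t v)"
proof -
  (* Only the finiteness of V is needed: g s is N ^ (colour after s rounds), which separates exactly
     the tuples the colouring separates, whatever c0 and RELABEL are. *)
  let ?col = "dkwl V E c0 R"
  obtain K where K: "\<forall>p<t. \<forall>u\<in>tuples V k. ?col p u < K"
    using finite_nat_set_iff_bounded[of "case_prod ?col ` ({..<t} \<times> tuples V k)"]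
      finite_tuples[OF assms(1)] by auto
  define N where "N = card V + 2"
  have N: "card V < N" "1 < N" by (simp_all add: N_def)
  have "\<exists>f. is_ffn f \<and> (\<forall>u\<in>tuples V k.
          f (wl_message V E N (N ^ K) (?col (s - 1)) u) = N ^ ?col s u)" if "s \<in> {1..t}" for s
  proof -
    have "s - 1 < t" "Suc (s - 1) = s" using that by auto
    then show ?thesis
      using dkwl_step_ffn[OF assms(1) N, where k = k and p = "s - 1" and K = K] K by metis
  qed
  then obtain ffn where ffn: "\<forall>s\<in>{1..t}. is_ffn (ffn s) \<and> (\<forall>u\<in>tuples V k.
          ffn s (wl_message V E N (N ^ K) (?col (s - 1)) u) = N ^ ?col s u)"
    by metis
  define g where "g s u = real (N ^ ?col s u)" for s u
  have g_inj: "g s u = g s v \<longleftrightarrow> ?col s u = ?col s v" for s u v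
    using N(2) by (simp add: g_def)
  define \<alpha> where "\<alpha> j = real (N ^ K) ^ (2*j+1)" for j
  define \<beta> where "\<beta> j = real (N ^ K) ^ (2*j+2)" for j
  have g_step: "g s u = ffn s (g (s - 1) u
          + (\<Sum>j<k. \<alpha> j * (\<Sum>w\<in>{w\<in>V. (u ! j, w) \<in> E}. g (s - 1) (u[j := w]))
                   + \<beta> j * (\<Sum>w\<in>V - {w\<in>V. (u ! j, w) \<in> E}. g (s - 1) (u[j := w]))))"
    if "s \<in> {1..t}" and "u \<in> tuples V k" for s u
    using ffn that by (simp add: g_def \<alpha>_def \<beta>_def wl_message_def tuples_def)
  show ?thesis
    using g_inj g_step ffn by (intro exI[of _ g] exI[of _ \<alpha>] exI[of _ \<beta>] exI[of _ ffn]) simp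
qed

end
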